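(* Let $J\subseteq S$ and $s\in S$. (1) If $s\in J$, then modulo $G_q(\emptyset)$, $\tau^+_Jt_s$ reduces to $(-1)^{\#J+1}q\tau^-_J$ and $\tau^-_Jt_s$ reduces to $(-1)^{\#J+1}\tau^+_J$. (2) If $s\notin J$ and $J''=\{j\in J\mid s<j\}$, then modulo $G_q(\emptyset)$, $\tau^+_Jt_s$ reduces to $(-1)^{\#J''}\tau^+_{J\cup\{s\}}+(-1)^{\#J+1}q\tau^-_J$ and $\tau^-_Jt_s$ reduces to $(-1)^{\#J''}\tau^-_{J\cup\{s\}}+(-1)^{\#J+1}\tau^+_J$.
   Context: $S$ is a finite set with a total order $<$, $R$ a commutative ring with $1$, $q\in R$, $A=R\langle t_s\mid s\in S\rangle$. For $J=\{j_1<\dots<j_{\#J}\}$, $t_J=t_{j_1}\cdots t_{j_{\#J}}$; for $I=\{j_{\alpha_1}<\dots<j_{\alpha_{\#I}}\}\subseteq J$, $\ell_J(I)=\sum_\nu(\alpha_\nu-\nu)$; $\tau^-_J=\sum_{I\subseteq J,\ \#I\text{ odd}}(-1)^{\ell_J(I)}(-q)^{(\#I-1)/2}t_{J\setminus I}$, $\tau^+_J=\sum_{I\subseteq J,\ \#I\text{ even}}(-1)^{\ell_J(I)}(-q)^{\#I/2}t_{J\setminus I}$. $G_q(\emptyset)=\{t_s^2-q: s\in S\}\cup\{t_rt_s+t_st_r-2q: s<r\}$, with leading monomials $t_s^2$ and $t_rt_s$ ($s<r$) for the degree lexicographic order (words compared by length, then lexicographically from the left). For a set $\mathcal I$ of elements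 with leading coefficient $1$, a reduction of $f$ modulo $\mathcal I$ replaces a term $c\,umv$ of $f$, where $m$ is the leading monomial of some $g\in\mathcal I$, by $c\,u(m-g)v$; $f$ reduces to $h$ if $h$ is obtained from $f$ by finitely many (possibly zero) reductions. *)

theory Defs
  imports "HOL-Library.Poly_Mapping"
begin

text \<open>The free algebra A = R<t_s | s in S>: finitely supported maps from words
  (lists of letters) to coefficients. The word [s1,...,sk] is the monomial t_s1...t_sk.\<close>

type_synonym ('s, 'r) ncpoly = "'s list \<Rightarrow>\<^sub>0 'r"

definition ncmult :: "('s, 'r::comm_ring_1) ncpoly \<Rightarrow> ('s, 'r) ncpoly \<Rightarrow> ('s, 'r) ncpoly"
    (infixl "\<cdot>" 70) where
  "p \<cdot> q = (\<Sum>u\<in>Poly_Mapping.keys p. \<Sum>v\<in>Poly_Mapping.keys q. Poly_Mapping.single (u @ v) (Poly_Mapping.lookup p u * Poly_Mapping.lookup q v))"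

definition scal :: "'r::comm_ring_1 \<Rightarrow> ('s, 'r) ncpoly \<Rightarrow> ('s, 'r) ncpoly" where
  "scal c p = Poly_Mapping.single [] c \<cdot> p"

definition gen :: "'s \<Rightarrow> ('s, 'r::comm_ring_1) ncpoly" where
  "gen s = Poly_Mapping.single [s] 1"

definition tJ :: "'s::linorder set \<Rightarrow> ('s, 'r::comm_ring_1) ncpoly" where
  "tJ J = Poly_Mapping.single (sorted_list_of_set J) 1"

text \<open>ell_J(I) = sum_nu (alpha_nu - nu), where alpha_nu is the position in J of the
  nu-th smallest element of I (position of i in J = #{j in J. j <= i}).\<close>
definition ellJ :: "'s::linorder set \<Rightarrow> 's set \<Rightarrow> nat" where
  "ellJ J I = (\<Sum>\<nu><card I. card {j\<in>J. j \<le> sorted_list_of_set I ! \<nu>} - (\<nu> + 1))"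

definition tau_minus :: "'r::comm_ring_1 \<Rightarrow> 's::linorder set \<Rightarrow> ('s, 'r) ncpoly" where
  "tau_minus q J = (\<Sum>I\<in>{I. I \<subseteq> J \<and> odd (card I)}.
      scal ((-1) ^ ellJ J I * (- q) ^ ((card I - 1) div 2)) (tJ (J - I)))"

definition tau_plus :: "'r::comm_ring_1 \<Rightarrow> 's::linorder set \<Rightarrow> ('s, 'r) ncpoly" where
  "tau_plus q J = (\<Sum>I\<in>{I. I \<subseteq> J \<and> even (card I)}.
      scal ((-1) ^ ellJ J I * (- q) ^ (card I div 2)) (tJ (J - I)))"

definition deglex_less :: "'s::linorder list \<Rightarrow> 's list \<Rightarrow> bool" where
  "deglex_less u v \<longleftrightarrow> length u < length v \<or> (length u = length v \<and> ord_class.lexordp u v)"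

definition lm :: "('s::linorder, 'r::comm_ring_1) ncpoly \<Rightarrow> 's list" where
  "lm g = (THE m. m \<in> Poly_Mapping.keys g \<and> (\<forall>w\<in>Poly_Mapping.keys g. w \<noteq> m \<longrightarrow> deglex_less w m))"

definition Gq_empty :: "'s::linorder set \<Rightarrow> 'r::comm_ring_1 \<Rightarrow> ('s, 'r) ncpoly set" where
  "Gq_empty S q = {gen s \<cdot> gen s - Poly_Mapping.single [] q | s. s \<in> S}
     \<union> {gen r \<cdot> gen s + gen s \<cdot> gen r - Poly_Mapping.single [] (2 * q) | r s. s \<in> S \<and> r \<in> S \<and> s < r}"

definition red1 :: "('s::linorder, 'r::comm_ring_1) ncpoly set \<Rightarrow> ('s, 'r) ncpoly \<Rightarrow> ('s, 'r) ncpoly \<Rightarrow> bool" where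
  "red1 G f h \<longleftrightarrow> (\<exists>g\<in>G. \<exists>u v. u @ lm g @ v \<in> Poly_Mapping.keys f \<and>
      h = f - Poly_Mapping.single (u @ lm g @ v) (Poly_Mapping.lookup f (u @ lm g @ v))
           + Poly_Mapping.single u (Poly_Mapping.lookup f (u @ lm g @ v)) \<cdot> (Poly_Mapping.single (lm g) 1 - g)
             \<cdot> Poly_Mapping.single v 1)"

definition reduces :: "('s::linorder, 'r::comm_ring_1) ncpoly set \<Rightarrow> ('s, 'r) ncpoly \<Rightarrow> ('s, 'r) ncpoly \<Rightarrow> bool" where
  "reduces G f h \<longleftrightarrow> (red1 G)\<^sup>*\<^sup>* f h"

end

theory Submission
  imports Defs
begin

text \<open>Reduction modulo \<open>G\<^sub>q(\<emptyset>)\<close> sorts words: a descent \<open>t\<^sub>a t\<^sub>a\<close> becomes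
  \<open>q\<close>, and \<open>t\<^sub>a t\<^sub>b\<close> with \<open>b < a\<close> becomes \<open>2q - t\<^sub>b t\<^sub>a\<close>. This rewriting terminates,
  so every polynomial reduces to the linear extension of the normal form of its words.

  For \<open>t\<^sub>J\<^sub>\<setminus>\<^sub>I t\<^sub>s\<close> the normal form is explicit: \<open>t\<^sub>s\<close> moves to the left through the
  letters \<open>k \<ge> s\<close> of \<open>J - I\<close>; passing \<open>t\<^sub>k\<close> leaves behind the contraction \<open>2q\<close>
  (or \<open>q\<close> if \<open>k = s\<close>), signed by the number of letters already passed, and at the end
  \<open>s\<close> is inserted with the corresponding sign. Collecting the coefficient of each word
  \<open>t\<^sub>J\<^sub>\<setminus>\<^sub>I\<close> in \<open>\<tau>\<^sup>\<plusminus>\<^sub>J t\<^sub>s\<close>, all contributions are integer multiples of a single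
  signed power of \<open>-q\<close>, and the contractions add up to an alternating sum of signs over
  the letters of \<open>I\<close> above \<open>s\<close>, which is \<open>0\<close> or \<open>1\<close>. This collapses the coefficients to
  those of \<open>\<tau>\<^sup>\<mp>\<^sub>J\<close> and \<open>\<tau>\<^sup>\<plusminus>\<^sub>J\<^sub>\<union>\<^sub>{\<^sub>s\<^sub>}\<close>.\<close>

section \<open>Arithmetic in the free algebra\<close>

lemma ncmult_expand:
  assumes "finite U" "finite V" "Poly_Mapping.keys p \<subseteq> U" "Poly_Mapping.keys q \<subseteq> V"
  shows "p \<cdot> q = (\<Sum>u\<in>U. \<Sum>v\<in>V.
    Poly_Mapping.single (u @ v) (Poly_Mapping.lookup p u * Poly_Mapping.lookup q v))"
proof -
  have "p \<cdot> q = (\<Sum>u\<in>Poly_Mapping.keys p. \<Sum>v\<in>V.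
      Poly_Mapping.single (u @ v) (Poly_Mapping.lookup p u * Poly_Mapping.lookup q v))"
    unfolding ncmult_def
    by (intro sum.cong refl sum.mono_neutral_left assms) (auto simp: in_keys_iff)
  also have "\<dots> = (\<Sum>u\<in>U. \<Sum>v\<in>V.
      Poly_Mapping.single (u @ v) (Poly_Mapping.lookup p u * Poly_Mapping.lookup q v))"
    by (intro sum.mono_neutral_left assms) (auto simp: in_keys_iff)
  finally show ?thesis .
qed

lemma ncmult_add_left: "(p + p') \<cdot> q = p \<cdot> q + p' \<cdot> q"
proof -
  let ?U = "Poly_Mapping.keys p \<union> Poly_Mapping.keys p'" and ?V = "Poly_Mapping.keys q"
  have "(p + p') \<cdot> q = (\<Sum>u\<in>?U. \<Sum>v\<in>?V. Poly_Mapping.single (u @ v)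
      (Poly_Mapping.lookup (p + p') u * Poly_Mapping.lookup q v))"
    by (rule ncmult_expand) (simp_all add: keys_add)
  also have "\<dots> = p \<cdot> q + p' \<cdot> q"
    by (simp add: ncmult_expand[of ?U ?V p] ncmult_expand[of ?U ?V p'] lookup_add distrib_right
        single_add sum.distrib)
  finally show ?thesis .
qed

lemma ncmult_add_right: "q \<cdot> (p + p') = q \<cdot> p + q \<cdot> p'"
proof -
  let ?U = "Poly_Mapping.keys q" and ?V = "Poly_Mapping.keys p \<union> Poly_Mapping.keys p'"
  have "q \<cdot> (p + p') = (\<Sum>u\<in>?U. \<Sum>v\<in>?V. Poly_Mapping.single (u @ v)
      (Poly_Mapping.lookup q u * Poly_Mapping.lookup (p + p') v))"
    by (rule ncmult_expand) (simp_all add: keys_add)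
  also have "\<dots> = q \<cdot> p + q \<cdot> p'"
    by (simp add: ncmult_expand[of ?U ?V q p] ncmult_expand[of ?U ?V q p'] lookup_add distrib_left
        single_add sum.distrib)
  finally show ?thesis .
qed

lemma ncmult_zero_left [simp]: "0 \<cdot> q = 0"
  by (simp add: ncmult_def)

lemma ncmult_diff_left: "(p - p') \<cdot> q = p \<cdot> q - p' \<cdot> q"
  by (metis add_diff_cancel diff_add_cancel ncmult_add_left)

lemma ncmult_diff_right: "q \<cdot> (p - p') = q \<cdot> p - q \<cdot> p'"
  by (metis add_diff_cancel diff_add_cancel ncmult_add_right)

lemma ncmult_sum_left: "(\<Sum>i\<in>A. f i) \<cdot> q = (\<Sum>i\<in>A. f i \<cdot> q)"
  by (induction A rule: infinite_finite_induct) (auto simp: ncmult_add_left)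

lemma ncmult_single:
  "Poly_Mapping.single u a \<cdot> Poly_Mapping.single v b = Poly_Mapping.single (u @ v) (a * b)"
  by (subst ncmult_expand[of "{u}" "{v}"]) auto

lemma gen_ncmult_gen: "gen a \<cdot> gen b = Poly_Mapping.single [a, b] 1"
  by (simp add: gen_def ncmult_single)

lemma lookup_scal: "Poly_Mapping.lookup (scal c p) w = c * Poly_Mapping.lookup p w"
proof -
  have "scal c p = (\<Sum>v\<in>Poly_Mapping.keys p. Poly_Mapping.single v (c * Poly_Mapping.lookup p v))"
    unfolding scal_def by (subst ncmult_expand[of "{[]}" "Poly_Mapping.keys p"]) auto
  then show ?thesis
    by (cases "w \<in> Poly_Mapping.keys p")
      (simp_all add: lookup_sum lookup_single when_def not_in_keys_iff_lookup_eq_zero)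
qed

lemma scal_single: "scal c (Poly_Mapping.single w a) = Poly_Mapping.single w (c * a)"
  by (rule poly_mapping_eqI) (simp add: lookup_scal lookup_single when_def)

lemma scal_add_left: "scal (a + b) p = scal a p + scal b p"
  by (rule poly_mapping_eqI) (simp add: lookup_scal lookup_add distrib_right)

lemma scal_add_right: "scal c (p + p') = scal c p + scal c p'"
  by (rule poly_mapping_eqI) (simp add: lookup_scal lookup_add distrib_left)

lemma scal_diff_right: "scal c (p - p') = scal c p - scal c p'"
  by (rule poly_mapping_eqI) (simp add: lookup_scal lookup_minus right_diff_distrib)

lemma scal_minus_left: "scal (- c) p = - scal c p"
  by (rule poly_mapping_eqI) (simp add: lookup_scal)

lemma scal_scal: "scal a (scal b p) = scal (a * b) p"
  by (rule poly_mapping_eqI) (simp add: lookup_scal mult.assoc)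

lemma scal_one [simp]: "scal 1 p = p"
  by (rule poly_mapping_eqI) (simp add: lookup_scal)

lemma scal_zero_left [simp]: "scal 0 p = 0"
  by (rule poly_mapping_eqI) (simp add: lookup_scal)

lemma scal_zero_right [simp]: "scal c 0 = 0"
  by (rule poly_mapping_eqI) (simp add: lookup_scal)

lemma scal_sum_left: "scal (\<Sum>i\<in>A. f i) p = (\<Sum>i\<in>A. scal (f i) p)"
  by (rule poly_mapping_eqI) (simp add: lookup_scal lookup_sum sum_distrib_right)

lemma scal_sum_right: "scal c (\<Sum>i\<in>A. f i) = (\<Sum>i\<in>A. scal c (f i))"
  by (rule poly_mapping_eqI) (simp add: lookup_scal lookup_sum sum_distrib_left)

lemma scal_tJ: "scal c (tJ K) = Poly_Mapping.single (sorted_list_of_set K) c"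
  by (simp add: tJ_def scal_single)

lemma poly_mapping_trivial_ring: "(1::'r::comm_ring_1) = 0 \<Longrightarrow> (p :: ('s, 'r) ncpoly) = 0"
  by (rule poly_mapping_eqI) (metis lookup_zero mult_1_right mult_zero_right)

section \<open>Normal forms modulo \<open>G\<^sub>q(\<emptyset>)\<close>\<close>

fun first_descent :: "'s::linorder list \<Rightarrow> ('s list \<times> 's \<times> 's \<times> 's list) option" where
  "first_descent (a # b # r) = (if b \<le> a then Some ([], a, b, r) else
     map_option (\<lambda>(u, x, y, v). (a # u, x, y, v)) (first_descent (b # r)))"
| "first_descent _ = None"

lemma first_descent_Some:
  "first_descent w = Some (u, a, b, v) \<Longrightarrow> w = u @ a # b # v \<and> b \<le> a"
  by (induction w arbitrary: u rule: first_descent.induct) (auto split: if_splits)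

lemma first_descent_None_iff: "first_descent w = None \<longleftrightarrow> sorted_wrt (<) w"
  by (induction w rule: first_descent.induct) (auto simp: not_le intro: less_trans)

lemma first_descent_append:
  "sorted_wrt (<) (u @ [a]) \<Longrightarrow> b \<le> a \<Longrightarrow> first_descent (u @ a # b # v) = Some (u, a, b, v)"
proof (induction u)
  case (Cons x u)
  then show ?case by (cases u) auto
qed simp

text \<open>The termination measure for sorting words over a finite alphabet \<open>S\<close>: it decreases
  when a descent is deleted or swapped.\<close>

definition rank :: "'s::linorder set \<Rightarrow> 's \<Rightarrow> nat" where
  "rank S x = card {y\<in>S. y \<le> x}"

fun word_weight :: "'s::linorder set \<Rightarrow> 's list \<Rightarrow> nat" where
  "word_weight S [] = 0"
| "word_weight S (x # xs) = rank S x * 2 ^ length xs + word_weight S xs"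

lemma word_weight_append_less:
  assumes "length w \<le> length w'" "word_weight S w < word_weight S w'"
  shows "word_weight S (u @ w) < word_weight S (u @ w')"
proof (induction u)
  case (Cons x u)
  have "rank S x * 2 ^ (length u + length w) \<le> rank S x * 2 ^ (length u + length w')"
    using assms by (intro mult_le_mono2 power_increasing) auto
  with Cons have "rank S x * 2 ^ (length u + length w) + word_weight S (u @ w)
      < rank S x * 2 ^ (length u + length w') + word_weight S (u @ w')"
    by (intro add_le_less_mono)
  then show ?case by simp
qed (use assms in simp)

lemma rank_less: "finite S \<Longrightarrow> a \<in> S \<Longrightarrow> b < a \<Longrightarrow> rank S b < rank S a"
  unfolding rank_def by (rule psubset_card_mono) (auto dest: leD)

lemma rank_pos: "finite S \<Longrightarrow> a \<in> S \<Longrightarrow> 0 < rank S a"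
  unfolding rank_def by (subst card_gt_0_iff) auto

lemma word_weight_delete_descent:
  assumes "first_descent w = Some (u, a, b, v)" "finite S" "a \<in> S"
  shows "word_weight S (u @ v) < word_weight S w"
proof -
  have "word_weight S v < word_weight S (a # b # v)"
    using rank_pos[OF assms(2,3)] by simp
  with first_descent_Some[OF assms(1)] show ?thesis
    by (auto intro: word_weight_append_less)
qed

lemma word_weight_swap_descent:
  assumes "first_descent w = Some (u, a, b, v)" "finite S" "a \<in> S" "a \<noteq> b"
  shows "word_weight S (u @ b # a # v) < word_weight S w"
proof -
  have "b < a" "w = u @ a # b # v"
    using first_descent_Some[OF assms(1)] assms(4) by auto
  moreover have "rank S b * (2 * 2 ^ length v) + rank S a * 2 ^ length v
      < rank S a * (2 * 2 ^ length v) + rank S b * 2 ^ length v"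
    using rank_less[OF assms(2,3) \<open>b < a\<close>] by (simp add: algebra_simps)
  ultimately show ?thesis
    by (auto intro: word_weight_append_less)
qed

text \<open>Letters outside \<open>S\<close> only occur to make the function total.\<close>

function nf :: "'s::linorder set \<Rightarrow> 'r::comm_ring_1 \<Rightarrow> 's list \<Rightarrow> ('s, 'r) ncpoly" where
  "nf S q w = (case first_descent w of
       None \<Rightarrow> Poly_Mapping.single w 1
     | Some (u, a, b, v) \<Rightarrow>
         if finite S \<and> a \<in> S \<and> b \<in> S then
           (if a = b then scal q (nf S q (u @ v))
            else scal (2 * q) (nf S q (u @ v)) - nf S q (u @ b # a # v))
         else Poly_Mapping.single w 1)"
  by pat_completeness auto
termination
  by (relation "measure (\<lambda>(S, q, w). word_weight S w)")
    (auto intro: word_weight_delete_descent word_weight_swap_descent)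

declare nf.simps [simp del]

lemma nf_sorted: "sorted_wrt (<) w \<Longrightarrow> nf S q w = Poly_Mapping.single w 1"
  by (subst nf.simps) (simp add: first_descent_None_iff[symmetric])

lemma nf_descent:
  "first_descent w = Some (u, a, b, v) \<Longrightarrow> finite S \<Longrightarrow> a \<in> S \<Longrightarrow> b \<in> S \<Longrightarrow>
    nf S q w = (if a = b then scal q (nf S q (u @ v))
                else scal (2 * q) (nf S q (u @ v)) - nf S q (u @ b # a # v))"
  by (subst nf.simps) simp

definition nf_lin :: "'s::linorder set \<Rightarrow> 'r::comm_ring_1 \<Rightarrow> ('s, 'r) ncpoly \<Rightarrow> ('s, 'r) ncpoly" where
  "nf_lin S q f = (\<Sum>w\<in>Poly_Mapping.keys f. scal (Poly_Mapping.lookup f w) (nf S q w))"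

lemma nf_lin_superset:
  "finite W \<Longrightarrow> Poly_Mapping.keys f \<subseteq> W \<Longrightarrow>
    nf_lin S q f = (\<Sum>w\<in>W. scal (Poly_Mapping.lookup f w) (nf S q w))"
  unfolding nf_lin_def by (rule sum.mono_neutral_left) (auto simp: in_keys_iff)

lemma nf_lin_add: "nf_lin S q (f + g) = nf_lin S q f + nf_lin S q g"
proof -
  let ?W = "Poly_Mapping.keys f \<union> Poly_Mapping.keys g"
  have "nf_lin S q (f + g) = (\<Sum>w\<in>?W. scal (Poly_Mapping.lookup (f + g) w) (nf S q w))"
    by (rule nf_lin_superset) (use keys_add[of f g] in auto)
  then show ?thesis
    by (simp add: lookup_add scal_add_left sum.distrib nf_lin_superset[of ?W f]
        nf_lin_superset[of ?W g])
qed

lemma nf_lin_diff: "nf_lin S q (f - g) = nf_lin S q f - nf_lin S q g"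
  by (metis add_diff_cancel diff_add_cancel nf_lin_add)

lemma nf_lin_zero [simp]: "nf_lin S q 0 = 0"
  by (simp add: nf_lin_def)

lemma nf_lin_sum: "nf_lin S q (\<Sum>i\<in>A. f i) = (\<Sum>i\<in>A. nf_lin S q (f i))"
  by (induction A rule: infinite_finite_induct) (auto simp: nf_lin_add)

lemma nf_lin_single: "nf_lin S q (Poly_Mapping.single w c) = scal c (nf S q w)"
  by (simp add: nf_lin_def)

lemma nf_lin_sorted: "\<forall>w\<in>Poly_Mapping.keys f. sorted_wrt (<) w \<Longrightarrow> nf_lin S q f = f"
proof (rule poly_mapping_eqI)
  fix x
  assume "\<forall>w\<in>Poly_Mapping.keys f. sorted_wrt (<) w"
  then show "Poly_Mapping.lookup (nf_lin S q f) x = Poly_Mapping.lookup f x"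
    unfolding nf_lin_def
    by (cases "x \<in> Poly_Mapping.keys f")
      (simp_all add: nf_sorted scal_single lookup_sum lookup_single when_def in_keys_iff)
qed

lemma lm_eqI:
  assumes "m \<in> Poly_Mapping.keys g"
    and "\<And>w. w \<in> Poly_Mapping.keys g \<Longrightarrow> w \<noteq> m \<Longrightarrow> deglex_less w m \<and> \<not> deglex_less m w"
  shows "lm g = m"
  unfolding lm_def
proof (rule the_equality)
  show "m \<in> Poly_Mapping.keys g \<and> (\<forall>w\<in>Poly_Mapping.keys g. w \<noteq> m \<longrightarrow> deglex_less w m)"
    using assms by simp
  fix m' assume m': "m' \<in> Poly_Mapping.keys g \<and> (\<forall>w\<in>Poly_Mapping.keys g. w \<noteq> m' \<longrightarrow> deglex_less w m')"
  show "m' = m"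
  proof (rule ccontr)
    assume "m' \<noteq> m"
    with m' assms(1) have "deglex_less m m'" by simp
    with assms(2)[of m'] m' \<open>m' \<noteq> m\<close> show False by simp
  qed
qed

lemma lm_square_relation:
  assumes "(1::'r::comm_ring_1) \<noteq> 0"
  shows "lm (gen a \<cdot> gen a - Poly_Mapping.single [] (q::'r)) = [a, a]"
proof (rule lm_eqI)
  let ?g = "gen a \<cdot> gen a - Poly_Mapping.single [] q"
  have "Poly_Mapping.keys ?g \<subseteq> {[a, a], []}"
    unfolding gen_ncmult_gen
    by (auto simp: in_keys_iff lookup_minus lookup_single when_def split: if_splits)
  then show "\<And>w. w \<in> Poly_Mapping.keys ?g \<Longrightarrow> w \<noteq> [a, a] \<Longrightarrow>
      deglex_less w [a, a] \<and> \<not> deglex_less [a, a] w"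
    by (auto simp: deglex_less_def)
  show "[a, a] \<in> Poly_Mapping.keys ?g"
    unfolding in_keys_iff gen_ncmult_gen using assms by (simp add: lookup_minus lookup_single)
qed

lemma lm_anticomm_relation:
  assumes "(1::'r::comm_ring_1) \<noteq> 0" "b < a"
  shows "lm (gen a \<cdot> gen b + gen b \<cdot> gen a - Poly_Mapping.single [] (2 * (q::'r))) = [a, b]"
proof (rule lm_eqI)
  let ?g = "gen a \<cdot> gen b + gen b \<cdot> gen a - Poly_Mapping.single [] (2 * q)"
  have "Poly_Mapping.keys ?g \<subseteq> {[a, b], [b, a], []}"
    unfolding gen_ncmult_gen
    by (auto simp: in_keys_iff lookup_minus lookup_add lookup_single when_def split: if_splits)
  then show "\<And>w. w \<in> Poly_Mapping.keys ?g \<Longrightarrow> w \<noteq> [a, b] \<Longrightarrow>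
      deglex_less w [a, b] \<and> \<not> deglex_less [a, b] w"
    using assms by (auto simp: deglex_less_def)
  show "[a, b] \<in> Poly_Mapping.keys ?g"
    unfolding in_keys_iff gen_ncmult_gen using assms
    by (simp add: lookup_minus lookup_add lookup_single)
qed

lemma red1_square:
  assumes "(1::'r::comm_ring_1) \<noteq> 0" "a \<in> S" "w = u @ a # a # v" "w \<in> Poly_Mapping.keys f"
  shows "red1 (Gq_empty S q) f
    (f - Poly_Mapping.single w (Poly_Mapping.lookup f w)
       + Poly_Mapping.single (u @ v) (Poly_Mapping.lookup f w * (q::'r)))"
proof -
  define g where "g = gen a \<cdot> gen a - Poly_Mapping.single [] q"
  have "g \<in> Gq_empty S q" "lm g = [a, a]"
    unfolding g_def Gq_empty_def using assms lm_square_relation by blast+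
  moreover have "Poly_Mapping.single [a, a] 1 - g = Poly_Mapping.single [] q"
    by (simp add: g_def gen_ncmult_gen)
  ultimately show ?thesis
    unfolding red1_def using assms
    by (intro bexI[of _ g] exI[of _ u] exI[of _ v]) (simp_all add: ncmult_single)
qed

lemma red1_anticomm:
  assumes "(1::'r::comm_ring_1) \<noteq> 0" "a \<in> S" "b \<in> S" "b < a" "w = u @ a # b # v"
    "w \<in> Poly_Mapping.keys f"
  shows "red1 (Gq_empty S q) f
    (f - Poly_Mapping.single w (Poly_Mapping.lookup f w)
       + (Poly_Mapping.single (u @ v) (Poly_Mapping.lookup f w * (2 * (q::'r)))
          - Poly_Mapping.single (u @ b # a # v) (Poly_Mapping.lookup f w)))"
proof -
  define g where "g = gen a \<cdot> gen b + gen b \<cdot> gen a - Poly_Mapping.single [] (2 * q)"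
  have "g \<in> Gq_empty S q" "lm g = [a, b]"
    unfolding g_def Gq_empty_def using assms lm_anticomm_relation by blast+
  moreover have "Poly_Mapping.single [a, b] 1 - g
      = Poly_Mapping.single [] (2 * q) - Poly_Mapping.single [b, a] 1"
    by (simp add: g_def gen_ncmult_gen)
  ultimately show ?thesis
    unfolding red1_def using assms
    by (intro bexI[of _ g] exI[of _ u] exI[of _ v])
      (simp_all add: ncmult_single ncmult_diff_left ncmult_diff_right)
qed

definition keys_weight :: "'s::linorder set \<Rightarrow> ('s, 'r::comm_ring_1) ncpoly \<Rightarrow> nat" where
  "keys_weight S f = (\<Sum>w\<in>Poly_Mapping.keys f. (3::nat) ^ word_weight S w)"

lemma keys_replace_subset:
  "Poly_Mapping.keys (f - Poly_Mapping.single w (Poly_Mapping.lookup f w) + g)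
    \<subseteq> (Poly_Mapping.keys f - {w}) \<union> Poly_Mapping.keys g"
  by (auto simp: in_keys_iff lookup_add lookup_minus lookup_single when_def split: if_splits)

text \<open>Replacing one word by at most two lighter words lowers the weight: this is why
  the base \<open>3\<close> is used.\<close>

lemma keys_weight_replace_less:
  assumes "w \<in> Poly_Mapping.keys f" "card (Poly_Mapping.keys g) \<le> 2"
    "\<And>x. x \<in> Poly_Mapping.keys g \<Longrightarrow> word_weight S x < word_weight S w"
  shows "keys_weight S (f - Poly_Mapping.single w (Poly_Mapping.lookup f w) + g) < keys_weight S f"
proof -
  let ?g = "\<lambda>x. (3::nat) ^ word_weight S x" and ?F = "Poly_Mapping.keys f - {w}"
    and ?N = "Poly_Mapping.keys g"
  have "sum ?g ?N < ?g w"
  proof -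
    have "3 * sum ?g ?N = (\<Sum>x\<in>?N. 3 ^ Suc (word_weight S x))"
      by (simp add: sum_distrib_left)
    also have "\<dots> \<le> (\<Sum>x\<in>?N. ?g w)"
      by (intro sum_mono power_increasing) (use assms(3) in \<open>auto simp: Suc_le_eq\<close>)
    also have "\<dots> \<le> 2 * ?g w"
      using assms(2) by simp
    finally have "3 * sum ?g ?N \<le> 2 * ?g w" .
    moreover have "?g w > 0" by simp
    ultimately show ?thesis by linarith
  qed
  have "keys_weight S (f - Poly_Mapping.single w (Poly_Mapping.lookup f w) + g) \<le> sum ?g (?F \<union> ?N)"
    unfolding keys_weight_def by (intro sum_mono2 keys_replace_subset) auto
  also have "\<dots> \<le> sum ?g ?F + sum ?g ?N"
    by (rule sum_Un_nat [THEN eq_imp_le, THEN le_trans]) auto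
  also have "\<dots> < sum ?g ?F + ?g w"
    using \<open>sum ?g ?N < ?g w\<close> by simp
  also have "\<dots> = keys_weight S f"
    unfolding keys_weight_def using assms(1) by (simp add: sum.remove)
  finally show ?thesis .
qed

lemma descent_replacement:
  fixes f :: "('s::linorder, 'r::comm_ring_1) ncpoly"
  assumes "finite S" "(1::'r) \<noteq> 0" "w \<in> Poly_Mapping.keys f" "set w \<subseteq> S"
    and "first_descent w = Some (u, a, b, v)"
  obtains g where "red1 (Gq_empty S q) f (f - Poly_Mapping.single w (Poly_Mapping.lookup f w) + g)"
    "nf_lin S q g = scal (Poly_Mapping.lookup f w) (nf S q w)" "card (Poly_Mapping.keys g) \<le> 2"
    "\<forall>x\<in>Poly_Mapping.keys g. word_weight S x < word_weight S w \<and> set x \<subseteq> S"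
proof -
  let ?c = "Poly_Mapping.lookup f w"
  have w: "w = u @ a # b # v" "b \<le> a"
    using first_descent_Some[OF assms(5)] by auto
  with assms(4) have ab: "a \<in> S" "b \<in> S"
    by auto
  have lighter_uv: "word_weight S (u @ v) < word_weight S w"
    by (rule word_weight_delete_descent[OF assms(5,1) ab(1)])
  show thesis
  proof (cases "a = b")
    case True
    let ?g = "Poly_Mapping.single (u @ v) (?c * q)"
    show thesis
    proof (rule that[of ?g])
      show "red1 (Gq_empty S q) f (f - Poly_Mapping.single w ?c + ?g)"
        using red1_square[OF assms(2) ab(1)] w True assms(3) by simp
      show "nf_lin S q ?g = scal ?c (nf S q w)"
        using nf_descent[OF assms(5,1) ab, of q] True by (simp add: nf_lin_single scal_scal)
      show "card (Poly_Mapping.keys ?g) \<le> 2"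
        by simp
      show "\<forall>x\<in>Poly_Mapping.keys ?g. word_weight S x < word_weight S w \<and> set x \<subseteq> S"
        using lighter_uv assms(4) w by (simp split: if_splits)
    qed
  next
    case False
    let ?g = "Poly_Mapping.single (u @ v) (?c * (2 * q)) - Poly_Mapping.single (u @ b # a # v) ?c"
    have keys_g: "Poly_Mapping.keys ?g \<subseteq> {u @ v, u @ b # a # v}"
      by (auto simp: in_keys_iff lookup_minus lookup_single when_def split: if_splits)
    show thesis
    proof (rule that[of ?g])
      show "red1 (Gq_empty S q) f (f - Poly_Mapping.single w ?c + ?g)"
        using red1_anticomm[OF assms(2) ab] w False assms(3) by simp
      show "nf_lin S q ?g = scal ?c (nf S q w)"
        using nf_descent[OF assms(5,1) ab, of q] False
        by (simp add: nf_lin_diff nf_lin_single scal_scal scal_diff_right)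
      show "card (Poly_Mapping.keys ?g) \<le> 2"
        using card_mono[OF _ keys_g] card_insert_le[of "{u @ b # a # v}" "u @ v"] by simp
      have "word_weight S (u @ b # a # v) < word_weight S w"
        by (rule word_weight_swap_descent[OF assms(5,1) ab(1) False])
      then have "\<forall>x\<in>{u @ v, u @ b # a # v}. word_weight S x < word_weight S w \<and> set x \<subseteq> S"
        using lighter_uv assms(4) w by auto
      then show "\<forall>x\<in>Poly_Mapping.keys ?g. word_weight S x < word_weight S w \<and> set x \<subseteq> S"
        using keys_g by blast
    qed
  qed
qed

theorem reduces_to_nf_lin:
  fixes f :: "('s::linorder, 'r::comm_ring_1) ncpoly"
  assumes "finite S" "(1::'r) \<noteq> 0"
  shows "\<forall>w\<in>Poly_Mapping.keys f. set w \<subseteq> S \<Longrightarrow> reduces (Gq_empty S q) f (nf_lin S q f)"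
proof (induction "keys_weight S f" arbitrary: f rule: less_induct)
  case less
  show ?case
  proof (cases "\<forall>w\<in>Poly_Mapping.keys f. sorted_wrt (<) w")
    case True
    then show ?thesis
      by (simp add: nf_lin_sorted reduces_def)
  next
    case False
    then obtain w u a b v where w: "w \<in> Poly_Mapping.keys f" "first_descent w = Some (u, a, b, v)"
      using first_descent_None_iff by fastforce
    with less.prems obtain g
      where g: "red1 (Gq_empty S q) f (f - Poly_Mapping.single w (Poly_Mapping.lookup f w) + g)"
        "nf_lin S q g = scal (Poly_Mapping.lookup f w) (nf S q w)" "card (Poly_Mapping.keys g) \<le> 2"
        "\<forall>x\<in>Poly_Mapping.keys g. word_weight S x < word_weight S w \<and> set x \<subseteq> S"
      using descent_replacement[OF assms] by blast
    define h where "h = f - Poly_Mapping.single w (Poly_Mapping.lookup f w) + g"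
    have "keys_weight S h < keys_weight S f"
      unfolding h_def using g(3,4) w(1) by (intro keys_weight_replace_less) auto
    moreover have "\<forall>x\<in>Poly_Mapping.keys h. set x \<subseteq> S"
      using keys_replace_subset[of f w g] less.prems g(4) unfolding h_def by blast
    ultimately have "reduces (Gq_empty S q) h (nf_lin S q h)"
      by (rule less.hyps)
    moreover have "nf_lin S q h = nf_lin S q f"
      unfolding h_def by (simp add: nf_lin_add nf_lin_diff nf_lin_single g(2))
    ultimately show ?thesis
      using g(1) unfolding reduces_def h_def by (simp add: converse_rtranclp_into_rtranclp)
  qed
qed

section \<open>Moving a generator to the left through an increasing word\<close>

lemma sorted_list_of_set_set_strict:
  "sorted_wrt (<) xs \<Longrightarrow> sorted_list_of_set (set xs) = xs"
  by (simp add: sorted_list_of_set_sort_remdups strict_sorted_iff distinct_remdups_id sorted_sort_id)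

lemma tJ_set: "sorted_wrt (<) xs \<Longrightarrow> tJ (set xs) = Poly_Mapping.single xs 1"
  by (simp add: tJ_def sorted_list_of_set_set_strict)

text \<open>The normal form of \<open>t\<^sub>A t\<^sub>s t\<^sub>B\<close> (\<open>A\<close>, \<open>B\<close> increasing, \<open>B\<close> above \<open>s\<close>) is the word
  with \<open>s\<close> inserted plus one contraction term for each \<open>k \<in> A\<close>, \<open>k \<ge> s\<close>:
  \<open>t\<^sub>k t\<^sub>s\<close> contracts to \<open>2q\<close> if \<open>k > s\<close> and to \<open>q\<close> if \<open>k = s\<close>, after passing the
  letters of \<open>A\<close> above \<open>k\<close>.\<close>

definition insert_term :: "'s::linorder \<Rightarrow> 's set \<Rightarrow> 's set \<Rightarrow> ('s, 'r::comm_ring_1) ncpoly" where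
  "insert_term s A B =
    (if s \<in> A then 0 else scal ((-1) ^ card {x\<in>A. s < x}) (tJ (insert s (A \<union> B))))"

definition contraction_terms ::
    "'r::comm_ring_1 \<Rightarrow> 's::linorder \<Rightarrow> 's set \<Rightarrow> 's set \<Rightarrow> ('s, 'r) ncpoly" where
  "contraction_terms q s A B = (\<Sum>k\<in>{k\<in>A. s \<le> k}.
     scal ((-1) ^ card {x\<in>A. k < x} * (if k = s then q else 2 * q)) (tJ ((A \<union> B) - {k})))"

lemma insert_term_insert_max:
  assumes "finite A" "\<forall>x\<in>A. x < a" "s < a"
  shows "insert_term s (insert a A) B = - insert_term s A (insert a B)"
proof -
  have "{x \<in> insert a A. s < x} = insert a {x \<in> A. s < x}" "a \<notin> A"
    using assms(2,3) by auto
  then have "card {x \<in> insert a A. s < x} = Suc (card {x \<in> A. s < x})"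
    using assms(1) by simp
  moreover have "insert s (insert a A \<union> B) = insert s (A \<union> insert a B)"
    by auto
  moreover have "s \<in> insert a A \<longleftrightarrow> s \<in> A"
    using assms(3) by auto
  ultimately show ?thesis
    unfolding insert_term_def by (simp add: scal_minus_left)
qed

lemma contraction_terms_insert_max:
  assumes "finite A" "\<forall>x\<in>A. x < a" "s < a" "a \<notin> B"
  shows "contraction_terms q s (insert a A) B
    = scal (2 * q) (tJ (A \<union> B)) - contraction_terms q s A (insert a B)"
proof -
  let ?F = "\<lambda>A B k.
    scal ((-1) ^ card {x\<in>A. k < x} * (if k = s then q else 2 * q)) (tJ ((A \<union> B) - {k}))"
  have aA: "a \<notin> A"
    using assms(2) by auto
  have F_a: "?F (insert a A) B a = scal (2 * q) (tJ (A \<union> B))"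
  proof -
    have "card {x \<in> insert a A. a < x} = 0"
      using assms(2) by (auto simp: card_eq_0_iff)
    moreover have "insert a A \<union> B - {a} = A \<union> B" "a \<noteq> s"
      using assms(3,4) aA by auto
    ultimately show ?thesis
      by simp
  qed
  have F_below: "?F (insert a A) B k = - ?F A (insert a B) k" if "k \<in> A" for k
  proof -
    have "{x \<in> insert a A. k < x} = insert a {x \<in> A. k < x}"
      using that assms(2) by auto
    then have "card {x \<in> insert a A. k < x} = Suc (card {x \<in> A. k < x})"
      using assms(1) aA by simp
    moreover have "insert a A \<union> B - {k} = A \<union> insert a B - {k}"
      by auto
    ultimately show ?thesis
      by (simp add: scal_minus_left)
  qed
  have "{k \<in> insert a A. s \<le> k} = insert a {k \<in> A. s \<le> k}"
    using assms(3) by auto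
  then have "contraction_terms q s (insert a A) B
      = ?F (insert a A) B a + (\<Sum>k\<in>{k\<in>A. s \<le> k}. ?F (insert a A) B k)"
    unfolding contraction_terms_def using assms(1) aA by simp
  also have "\<dots> = scal (2 * q) (tJ (A \<union> B)) - contraction_terms q s A (insert a B)"
    unfolding F_a contraction_terms_def using F_below by (simp add: sum_negf)
  finally show ?thesis .
qed

lemma nf_bubble_in_place:
  assumes "sorted_wrt (<) (A @ B)" "\<forall>a\<in>set A. a < s" "\<forall>b\<in>set B. s < b"
  shows "nf S q (A @ s # B) = insert_term s (set A) (set B) + contraction_terms q s (set A) (set B)"
proof -
  have "sorted_wrt (<) (A @ s # B)"
    using assms by (auto simp: sorted_wrt_append)
  then have "nf S q (A @ s # B) = tJ (insert s (set A \<union> set B))"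
    by (simp add: nf_sorted tJ_set[symmetric])
  moreover have "{k \<in> set A. s \<le> k} = {}" "{x \<in> set A. s < x} = {}" "s \<notin> set A"
    using assms(2) by auto
  ultimately show ?thesis
    unfolding insert_term_def contraction_terms_def
    by (simp only: if_False card.empty power_0 sum.empty scal_one add_0_right)
qed

lemma nf_bubble:
  assumes "finite S" "s \<in> S"
  shows "set A \<subseteq> S \<Longrightarrow> sorted_wrt (<) (A @ B) \<Longrightarrow> \<forall>b\<in>set B. s < b \<Longrightarrow>
    nf S q (A @ s # B) = insert_term s (set A) (set B) + contraction_terms q s (set A) (set B)"
proof (induction A arbitrary: B rule: rev_induct)
  case Nil
  then show ?case
    by (intro nf_bubble_in_place) simp_all
next
  case (snoc a A)
  have below_a: "\<forall>x\<in>set A. x < a" and above_a: "\<forall>x\<in>set B. a < x"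
    and sorted_AB: "sorted_wrt (<) (A @ B)" and sorted_Aa: "sorted_wrt (<) (A @ [a])"
    using snoc.prems(2) by (auto simp: sorted_wrt_append)
  have set_Aa: "set (A @ [a]) = insert a (set A)"
    by simp
  have descent: "s \<le> a \<Longrightarrow> first_descent (A @ a # s # B) = Some (A, a, s, B)"
    by (rule first_descent_append[OF sorted_Aa])
  have aS: "a \<in> S"
    using snoc.prems(1) by simp
  consider "a < s" | "a = s" | "s < a"
    by fastforce
  then show ?case
  proof cases
    case 1
    then show ?thesis
      using snoc.prems(2,3) below_a by (intro nf_bubble_in_place) auto
  next
    case 2
    have "nf S q ((A @ [a]) @ s # B) = scal q (tJ (set (A @ B)))"
      using nf_descent[OF descent assms(1) aS assms(2)] 2 sorted_AB
      by (simp add: nf_sorted tJ_set del: set_append)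
    then have "nf S q ((A @ [a]) @ s # B) = scal q (tJ (set A \<union> set B))"
      by simp
    moreover have "{k \<in> insert a (set A). s \<le> k} = {s}" "card {x \<in> insert a (set A). s < x} = 0"
      "insert a (set A) \<union> set B - {s} = set A \<union> set B"
      using 2 below_a above_a by (auto simp: card_eq_0_iff)
    ultimately show ?thesis
      unfolding set_Aa insert_term_def contraction_terms_def using 2
      by (simp add: insertI1 del: insert_iff card_0_eq)
  next
    case 3
    have IH: "nf S q (A @ s # a # B)
        = insert_term s (set A) (set (a # B)) + contraction_terms q s (set A) (set (a # B))"
      by (rule snoc.IH) (use snoc.prems sorted_AB 3 above_a in \<open>auto simp: sorted_wrt_append\<close>)
    have "nf S q ((A @ [a]) @ s # B) = scal (2 * q) (tJ (set (A @ B))) - nf S q (A @ s # a # B)"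
      using nf_descent[OF descent assms(1) aS assms(2), of q] 3 sorted_AB
      by (simp add: nf_sorted tJ_set less_imp_neq[symmetric] del: set_append)
    moreover have "a \<notin> set B"
      using above_a by auto
    ultimately show ?thesis
      unfolding set_Aa IH using 3 below_a
      by (simp add: insert_term_insert_max contraction_terms_insert_max)
  qed
qed

section \<open>Inversion counts and signs\<close>

lemma minus_one_power_cong: "even m = even n \<Longrightarrow> (-1::'a::comm_ring_1) ^ m = (-1) ^ n"
  by (simp add: minus_one_power_iff)

lemma card_split_less:
  fixes x :: "'a::linorder"
  assumes "finite A" "x \<notin> A"
  shows "card A = card {y\<in>A. y < x} + card {y\<in>A. x < y}"
proof -
  have "A = {y\<in>A. y < x} \<union> {y\<in>A. x < y}"
    using assms(2) by (auto simp: not_less le_less)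
  then show ?thesis
    by (metis (no_types, lifting) assms(1) card_Un_disjoint disjoint_iff finite_Un less_asym mem_Collect_eq)
qed

lemma card_split_subset:
  assumes "finite J" "I \<subseteq> J"
  shows "card {y\<in>J. P y} = card {y\<in>I. P y} + card {y\<in>J - I. P y}"
proof -
  have "{y\<in>J. P y} = {y\<in>I. P y} \<union> {y\<in>J - I. P y}"
    using assms(2) by auto
  then show ?thesis
    by (simp add: card_Un_disjoint assms(1) finite_subset[OF assms(2)] disjoint_iff)
qed

lemma alternating_sign_sum:
  "finite (X::'b::linorder set) \<Longrightarrow>
    (\<Sum>k\<in>X. (-1::'a::comm_ring_1) ^ card {x\<in>X. k < x}) = (if odd (card X) then 1 else 0)"
proof (induction "card X" arbitrary: X)
  case (Suc n)
  define m where "m = Max X"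
  have mX: "m \<in> X" and m_max: "\<And>x. x \<in> X \<Longrightarrow> x \<le> m"
    using Suc m_def by (auto intro: Max_in)
  let ?Y = "X - {m}"
  have card_Y: "card ?Y = n"
    using Suc.hyps(2) mX Suc.prems by simp
  have shift: "(-1::'a) ^ card {x\<in>X. k < x} = - ((-1) ^ card {x\<in>?Y. k < x})" if "k \<in> ?Y" for k
  proof -
    have "{x\<in>X. k < x} = insert m {x\<in>?Y. k < x}"
      using that m_max mX by (auto simp: order.not_eq_order_implies_strict)
    then show ?thesis
      using Suc.prems by simp
  qed
  have "{x\<in>X. m < x} = {}"
    using m_max by (auto simp: not_less[symmetric])
  then have "(-1::'a) ^ card {x\<in>X. m < x} = 1"
    by (simp only: card.empty power_0)
  then have "(\<Sum>k\<in>X. (-1::'a) ^ card {x\<in>X. k < x}) = 1 - (\<Sum>k\<in>?Y. (-1) ^ card {x\<in>?Y. k < x})"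
    using Suc.prems mX shift by (simp add: sum.remove sum_negf)
  also have "\<dots> = (if odd (card X) then 1 else 0)"
    using Suc.hyps(1)[of ?Y] Suc.hyps(2)[symmetric] card_Y Suc.prems by simp
  finally show ?case .
qed simp

text \<open>The paper's \<open>\<ell>\<^sub>J(I)\<close>, counted as pairs \<open>j < i\<close> with \<open>i \<in> I\<close> and
  \<open>j \<in> J - I\<close>.\<close>

definition inversions :: "'s::linorder set \<Rightarrow> 's set \<Rightarrow> nat" where
  "inversions J I = (\<Sum>i\<in>I. card {j\<in>J - I. j < i})"

lemma card_le_sorted_list_of_set_nth:
  assumes "finite I" "\<nu> < card I"
  shows "card {j\<in>I. j \<le> sorted_list_of_set I ! \<nu>} = Suc \<nu>"
proof -
  let ?L = "sorted_list_of_set I"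
  have sL: "sorted_wrt (<) ?L" by (rule strict_sorted_list_of_set)
  have lL: "length ?L = card I" by simp
  have setL: "set ?L = I" using assms(1) by (rule set_sorted_list_of_set)
  have dL: "distinct ?L" by (rule distinct_sorted_list_of_set)
  have eq: "{j\<in>I. j \<le> ?L ! \<nu>} = (!) ?L ` {..\<nu>}"
  proof (intro equalityI subsetI)
    fix j assume j: "j \<in> {j\<in>I. j \<le> ?L ! \<nu>}"
    have "j \<in> set ?L" using setL j by simp
    then obtain i where i: "i < length ?L" "j = ?L ! i" by (auto simp: in_set_conv_nth)
    have "i \<le> \<nu>"
    proof (rule ccontr)
      assume "\<not> i \<le> \<nu>"
      then have lt: "?L ! \<nu> < ?L ! i" using sorted_wrt_nth_less[OF sL, of \<nu> i] i by simp
      have "?L ! i \<le> ?L ! \<nu>" using j i by simp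
      then show False using lt by simp
    qed
    then show "j \<in> (!) ?L ` {..\<nu>}" using i by auto
  next
    fix j assume "j \<in> (!) ?L ` {..\<nu>}"
    then obtain i where i: "i \<le> \<nu>" "j = ?L ! i" by auto
    have il: "i < length ?L" using i assms lL by simp
    have "j \<in> I" using nth_mem[OF il] i setL by simp
    moreover have "j \<le> ?L ! \<nu>"
    proof (cases "i = \<nu>")
      case False
      then have "i < \<nu>" using i by simp
      then show ?thesis using sorted_wrt_nth_less[OF sL, of i \<nu>] i assms lL by simp
    qed (use i in simp)
    ultimately show "j \<in> {j\<in>I. j \<le> ?L ! \<nu>}" by simp
  qed
  have "inj_on ((!) ?L) {..\<nu>}"
    using dL assms lL by (auto simp: inj_on_def nth_eq_iff_index_eq)
  then show ?thesis unfolding eq by (simp add: card_image)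
qed

lemma ellJ_eq_inversions:
  assumes "finite J" "I \<subseteq> J"
  shows "ellJ J I = inversions J I"
proof -
  have fI: "finite I"
    using assms finite_subset by blast
  let ?L = "sorted_list_of_set I"
  have term_eq: "card {j\<in>J. j \<le> ?L ! \<nu>} - (\<nu> + 1) = card {j\<in>J - I. j < ?L ! \<nu>}"
    if "\<nu> < card I" for \<nu>
  proof -
    have x: "?L ! \<nu> \<in> I"
      using that fI nth_mem by (metis length_sorted_list_of_set set_sorted_list_of_set)
    have "{j\<in>J. j \<le> ?L ! \<nu>} = {j\<in>J - I. j < ?L ! \<nu>} \<union> {j\<in>I. j \<le> ?L ! \<nu>}"
      using assms(2) x by (auto simp: order.order_iff_strict)
    then have "card {j\<in>J. j \<le> ?L ! \<nu>} = card {j\<in>J - I. j < ?L ! \<nu>} + card {j\<in>I. j \<le> ?L ! \<nu>}"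
      using assms(1) fI by (simp add: card_Un_disjoint disjoint_iff)
    then show ?thesis
      using card_le_sorted_list_of_set_nth[OF fI that] by simp
  qed
  have "ellJ J I = (\<Sum>\<nu><card I. card {j\<in>J - I. j < ?L ! \<nu>})"
    unfolding ellJ_def using term_eq by (intro sum.cong) auto
  also have "\<dots> = inversions J I"
    unfolding inversions_def
    by (rule sum.reindex_bij_betw[OF bij_betw_nth[OF distinct_sorted_list_of_set]])
      (use fI in \<open>auto simp: lessThan_def\<close>)
  finally show ?thesis .
qed

lemma inversions_insert_outside:
  assumes "finite J" "s \<notin> J" "I \<subseteq> J"
  shows "inversions (insert s J) I = inversions J I + card {i\<in>I. s < i}"
proof -
  have "card {j \<in> insert s J - I. j < i} = card {j\<in>J - I. j < i} + (if s < i then 1 else 0)"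
    if "i \<in> I" for i
  proof -
    have "{j \<in> insert s J - I. j < i} = (if s < i then insert s {j\<in>J - I. j < i} else {j\<in>J - I. j < i})"
      using assms by auto
    then show ?thesis
      using assms by simp
  qed
  then show ?thesis
    unfolding inversions_def using finite_subset[OF assms(3,1)]
    by (simp add: sum.distrib sum.If_cases Int_def)
qed

lemma inversions_insert_both:
  assumes "finite J" "s \<notin> J" "I \<subseteq> J"
  shows "inversions (insert s J) (insert s I) = inversions J I + card {j\<in>J - I. j < s}"
proof -
  have "insert s J - insert s I = J - I" "s \<notin> I"
    using assms by auto
  then show ?thesis
    unfolding inversions_def using finite_subset[OF assms(3,1)] by (simp add: add.commute)
qed

lemma inversions_remove:
  assumes "finite J" "I \<subseteq> J" "k \<in> I"
  shows "inversions J I + card {i\<in>I. k < i} = inversions J (I - {k}) + card {j\<in>J - I. j < k}"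
proof -
  have fI: "finite I"
    using assms finite_subset by blast
  have "card {j \<in> J - (I - {k}). j < i} = card {j\<in>J - I. j < i} + (if k < i then 1 else 0)"
    if "i \<in> I - {k}" for i
  proof -
    have "{j \<in> J - (I - {k}). j < i} = (if k < i then insert k {j\<in>J - I. j < i} else {j\<in>J - I. j < i})"
      using assms(2,3) by auto
    then show ?thesis
      using assms(1,3) by simp
  qed
  then have "inversions J (I - {k}) = (\<Sum>i\<in>I - {k}. card {j\<in>J - I. j < i}) + card {i\<in>I - {k}. k < i}"
    unfolding inversions_def using fI by (simp add: sum.distrib sum.If_cases Int_def)
  moreover have "{i\<in>I - {k}. k < i} = {i\<in>I. k < i}"
    by auto
  moreover have "inversions J I = (\<Sum>i\<in>I - {k}. card {j\<in>J - I. j < i}) + card {j\<in>J - I. j < k}"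
    unfolding inversions_def using fI assms(3) by (simp add: sum.remove)
  ultimately show ?thesis
    by simp
qed

text \<open>Parity of the sign picked up when the letter \<open>k \<in> I\<close> is moved from \<open>I\<close> to the
  complement and then to the end of the word.\<close>

lemma inversions_remove_parity:
  assumes "finite J" "I \<subseteq> J" "k \<in> I"
  shows "even (inversions J (I - {k}) + card {x\<in>J - I. k < x})
    \<longleftrightarrow> even (inversions J I + card (J - I) + card {i\<in>I. k < i})"
proof -
  have "card (J - I) = card {x\<in>J - I. x < k} + card {x\<in>J - I. k < x}"
    using assms by (intro card_split_less) auto
  with inversions_remove[OF assms] show ?thesis
    by presburger
qed

section \<open>The coefficients of \<open>\<tau>\<^sup>\<plusminus>\<^sub>J t\<^sub>s\<close>\<close>

definition tau_coeff :: "'r::comm_ring_1 \<Rightarrow> 's::linorder set \<Rightarrow> 's set \<Rightarrow> 'r" where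
  "tau_coeff q J I = (-1) ^ inversions J I * (- q) ^ (card I div 2)"

text \<open>Every contribution to the coefficient of \<open>t\<^sub>J\<^sub>\<setminus>\<^sub>I\<close> in the normal form of
  \<open>\<tau>\<^sup>\<plusminus>\<^sub>J t\<^sub>s\<close> is an integer multiple of this quantity.\<close>

definition pivot_coeff :: "'r::comm_ring_1 \<Rightarrow> 's::linorder set \<Rightarrow> 's set \<Rightarrow> 'r" where
  "pivot_coeff q J I = (-1) ^ (inversions J I + card (J - I)) * (- q) ^ ((card I + 1) div 2)"

lemma pivot_coeff_eq_tau_coeff:
  fixes q :: "'r::comm_ring_1"
  assumes "finite J" "I \<subseteq> J"
  shows "(-1) ^ (card J + 1) * (if odd (card I) then q else 1) * tau_coeff q J I
    = - pivot_coeff q J I"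
proof -
  have card_J: "card J = card (J - I) + card I"
    using assms by (simp add: card_Diff_subset card_mono finite_subset)
  show ?thesis
  proof (cases "odd (card I)")
    case True
    then obtain d where "card I = 2 * d + 1"
      using oddE by blast
    then show ?thesis
      unfolding tau_coeff_def pivot_coeff_def card_J by (simp add: power_add)
  next
    case False
    then obtain d where "card I = 2 * d"
      using evenE by blast
    then show ?thesis
      unfolding tau_coeff_def pivot_coeff_def card_J by (simp add: power_add)
  qed
qed

lemma tau_coeff_remove:
  fixes q :: "'r::comm_ring_1"
  assumes "finite J" "I \<subseteq> J" "k \<in> I"
  shows "tau_coeff q J (I - {k}) * (-1) ^ card {x\<in>J - (I - {k}). k < x} * q
    = - ((-1) ^ card {i\<in>I. k < i} * pivot_coeff q J I)"
proof -
  have "finite I"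
    using assms finite_subset by blast
  then have "card I \<noteq> 0" "card (I - {k}) = card I - 1"
    using assms(3) by auto
  then have "(card I + 1) div 2 = Suc (card (I - {k}) div 2)"
    by presburger
  then have power: "(- q) ^ (card (I - {k}) div 2) * q = - ((- q) ^ ((card I + 1) div 2))"
    by simp
  have compl: "{x\<in>J - (I - {k}). k < x} = {x\<in>J - I. k < x}"
    by auto
  have sign: "(-1::'r) ^ inversions J (I - {k}) * (-1) ^ card {x\<in>J - (I - {k}). k < x}
      = (-1) ^ (inversions J I + card (J - I)) * (-1) ^ card {i\<in>I. k < i}"
    unfolding power_add[symmetric]
    by (rule minus_one_power_cong) (use inversions_remove_parity[OF assms] compl in simp)
  have "tau_coeff q J (I - {k}) * (-1) ^ card {x\<in>J - (I - {k}). k < x} * q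
      = ((-1) ^ inversions J (I - {k}) * (-1) ^ card {x\<in>J - (I - {k}). k < x})
        * ((- q) ^ (card (I - {k}) div 2) * q)"
    unfolding tau_coeff_def by (simp only: mult_ac)
  also have "\<dots> = - ((-1) ^ card {i\<in>I. k < i} * pivot_coeff q J I)"
    unfolding sign power pivot_coeff_def by (simp only: mult_ac mult_minus_right mult_minus_left)
  finally show ?thesis .
qed

lemma tau_coeff_insert_both:
  fixes q :: "'r::comm_ring_1"
  assumes "finite J" "s \<notin> J" "I \<subseteq> J"
  shows "(-1) ^ card {j\<in>J. s < j} * tau_coeff q (insert s J) (insert s I)
    = (-1) ^ card {i\<in>I. s < i} * pivot_coeff q J I"
proof -
  have "card {j\<in>J. s < j} = card {i\<in>I. s < i} + card {j\<in>J - I. s < j}"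
    by (rule card_split_subset[OF assms(1,3)])
  moreover have "card (J - I) = card {j\<in>J - I. j < s} + card {j\<in>J - I. s < j}"
    using assms(1,2) by (intro card_split_less) auto
  ultimately have exponent: "card {j\<in>J. s < j} + inversions (insert s J) (insert s I)
      = card {i\<in>I. s < i} + (inversions J I + card (J - I))"
    using inversions_insert_both[OF assms] by simp
  have "s \<notin> I"
    using assms(2,3) by blast
  then have "card (insert s I) = card I + 1"
    using finite_subset[OF assms(3,1)] by simp
  then have "(-1) ^ card {j\<in>J. s < j} * tau_coeff q (insert s J) (insert s I)
      = (-1) ^ (card {j\<in>J. s < j} + inversions (insert s J) (insert s I))
        * (- q) ^ ((card I + 1) div 2)"
    unfolding tau_coeff_def by (simp only: power_add mult.assoc)
  also have "\<dots> = (-1) ^ card {i\<in>I. s < i} * pivot_coeff q J I"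
    unfolding exponent pivot_coeff_def by (simp only: power_add mult.assoc)
  finally show ?thesis .
qed

lemma tau_coeff_insert_outside:
  fixes q :: "'r::comm_ring_1"
  assumes "finite J" "s \<notin> J" "I \<subseteq> J"
  shows "tau_coeff q J I * (-1) ^ card {x\<in>J - I. s < x}
    = (-1) ^ card {j\<in>J. s < j} * tau_coeff q (insert s J) I"
proof -
  have sign: "(-1::'r) ^ (inversions J I + card {x\<in>J - I. s < x})
      = (-1) ^ (card {j\<in>J. s < j} + inversions (insert s J) I)"
    by (rule minus_one_power_cong)
      (use card_split_subset[OF assms(1,3)] inversions_insert_outside[OF assms] in presburger)
  have "tau_coeff q J I * (-1) ^ card {x\<in>J - I. s < x}
      = (-1) ^ (inversions J I + card {x\<in>J - I. s < x}) * (- q) ^ (card I div 2)"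
    unfolding tau_coeff_def by (simp only: power_add mult_ac)
  also have "\<dots> = (-1) ^ card {j\<in>J. s < j} * tau_coeff q (insert s J) I"
    unfolding sign tau_coeff_def by (simp only: power_add mult_ac)
  finally show ?thesis .
qed

lemma tau_coeff_insert_inside:
  fixes q :: "'r::comm_ring_1"
  assumes "finite J" "s \<in> J" "s \<notin> I" "I \<subseteq> J"
  shows "tau_coeff q J (insert s I) * (-1) ^ card {x\<in>J - insert s I. s < x}
    = - ((-1) ^ card {i\<in>I. s < i} * pivot_coeff q J I)"
proof -
  have I': "insert s I \<subseteq> J" "insert s I - {s} = I"
    using assms by auto
  have card_ins: "card (insert s I) = card I + 1"
    using assms(3) finite_subset[OF assms(4,1)] by simp
  have "card (J - insert s I) = card (J - I) - 1" "card (J - I) > 0"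
    using assms by (auto simp: card_Diff_insert card_gt_0_iff)
  then have card_compl: "card (J - I) = card (J - insert s I) + 1"
    by simp
  have "{i \<in> insert s I. s < i} = {i\<in>I. s < i}" "{x\<in>J - I. s < x} = {x\<in>J - insert s I. s < x}"
    by auto
  then have sign: "(-1::'r) ^ (inversions J (insert s I) + card {x\<in>J - insert s I. s < x})
      = (-1) ^ (inversions J I + card (J - I) + card {i\<in>I. s < i} + 1)"
    using inversions_remove_parity[OF assms(1) I'(1) insertI1, unfolded I'(2)] card_compl
    by (intro minus_one_power_cong) presburger
  have "tau_coeff q J (insert s I) * (-1) ^ card {x\<in>J - insert s I. s < x}
      = (-1) ^ (inversions J (insert s I) + card {x\<in>J - insert s I. s < x})
        * (- q) ^ (card (insert s I) div 2)"
    unfolding tau_coeff_def by (simp only: power_add mult_ac)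
  also have "\<dots> = - ((-1) ^ card {i\<in>I. s < i} * pivot_coeff q J I)"
    unfolding sign card_ins pivot_coeff_def
    by (simp only: power_add power_one_right mult_minus1_right mult_minus_left mult_minus_right
        mult_1 mult_ac)
  finally show ?thesis .
qed

text \<open>The coefficient of \<open>t\<^sub>J\<^sub>\<setminus>\<^sub>I\<close> contributed by contracting \<open>t\<^sub>k t\<^sub>s\<close> in the
  normal form of \<open>t\<^sub>J\<^sub>\<setminus>\<^sub>(\<^sub>I\<^sub>\<setminus>\<^sub>{\<^sub>k\<^sub>}\<^sub>) t\<^sub>s\<close>.\<close>

definition contraction_coeff :: "'r::comm_ring_1 \<Rightarrow> 's::linorder \<Rightarrow> 's set \<Rightarrow> 's set \<Rightarrow> 's \<Rightarrow> 'r" where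
  "contraction_coeff q s J I k =
    tau_coeff q J (I - {k}) * (-1) ^ card {x\<in>J - (I - {k}). k < x} * (if k = s then q else 2 * q)"

lemma contraction_coeff_eq:
  fixes q :: "'r::comm_ring_1"
  assumes "finite J" "I \<subseteq> J" "k \<in> I"
  shows "contraction_coeff q s J I k
    = - ((if k = s then 1 else 2) * (-1) ^ card {i\<in>I. k < i} * pivot_coeff q J I)"
proof -
  have "contraction_coeff q s J I k
      = (if k = s then 1 else 2)
        * (tau_coeff q J (I - {k}) * (-1) ^ card {x\<in>J - (I - {k}). k < x} * q)"
    unfolding contraction_coeff_def by (simp add: mult_ac)
  then show ?thesis
    unfolding tau_coeff_remove[OF assms] by (simp add: mult_ac)
qed

lemma sum_contraction_coeff_above:
  fixes q :: "'r::comm_ring_1"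
  assumes "finite J" "I \<subseteq> J"
  shows "(\<Sum>k\<in>{k\<in>I. s < k}. contraction_coeff q s J I k)
    = ((-1) ^ card {k\<in>I. s < k} - 1) * pivot_coeff q J I"
proof -
  let ?X = "{k\<in>I. s < k}"
  have "finite ?X"
    using finite_subset[OF assms(2,1)] by simp
  have "(\<Sum>k\<in>?X. contraction_coeff q s J I k)
      = (\<Sum>k\<in>?X. - (2 * pivot_coeff q J I) * (-1) ^ card {i\<in>?X. k < i})"
  proof (rule sum.cong)
    fix k assume k: "k \<in> ?X"
    then have "k \<noteq> s" "k \<in> I" "{i\<in>I. k < i} = {i\<in>?X. k < i}"
      by auto
    then show "contraction_coeff q s J I k = - (2 * pivot_coeff q J I) * (-1) ^ card {i\<in>?X. k < i}"
      using contraction_coeff_eq[OF assms, of k q s] by (simp add: mult_ac)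
  qed simp
  also have "\<dots> = - (2 * pivot_coeff q J I) * (\<Sum>k\<in>?X. (-1) ^ card {i\<in>?X. k < i})"
    by (simp only: sum_distrib_left)
  also have "\<dots> = ((-1) ^ card ?X - 1) * pivot_coeff q J I"
    unfolding alternating_sign_sum[OF \<open>finite ?X\<close>] by (simp add: minus_one_power_iff)
  finally show ?thesis .
qed

lemma sum_contraction_coeff_outside:
  fixes q :: "'r::comm_ring_1"
  assumes "finite J" "s \<notin> J" "I \<subseteq> J"
  shows "(\<Sum>k\<in>{k\<in>I. s \<le> k}. contraction_coeff q s J I k)
    = (-1) ^ card {j\<in>J. s < j} * tau_coeff q (insert s J) (insert s I)
      + (-1) ^ (card J + 1) * (if odd (card I) then q else 1) * tau_coeff q J I"
proof -
  have above: "{k\<in>I. s \<le> k} = {k\<in>I. s < k}"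
    using assms(2,3) by (auto simp: le_less)
  show ?thesis
    unfolding above sum_contraction_coeff_above[OF assms(1,3)] tau_coeff_insert_both[OF assms]
      pivot_coeff_eq_tau_coeff[OF assms(1,3)]
    by (simp add: algebra_simps)
qed

lemma sum_contraction_coeff_inside:
  fixes q :: "'r::comm_ring_1"
  assumes "finite J" "s \<in> J" "I \<subseteq> J"
  shows "(if s \<in> I then 0 else tau_coeff q J (insert s I) * (-1) ^ card {x\<in>J - insert s I. s < x})
      + (\<Sum>k\<in>{k\<in>I. s \<le> k}. contraction_coeff q s J I k)
    = (-1) ^ (card J + 1) * (if odd (card I) then q else 1) * tau_coeff q J I"
proof (cases "s \<in> I")
  case True
  have "finite {k\<in>I. s < k}"
    using finite_subset[OF assms(3,1)] by simp
  moreover have "{k\<in>I. s \<le> k} = insert s {k\<in>I. s < k}"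
    using True by (auto simp: le_less)
  ultimately have "(\<Sum>k\<in>{k\<in>I. s \<le> k}. contraction_coeff q s J I k)
      = contraction_coeff q s J I s + (\<Sum>k\<in>{k\<in>I. s < k}. contraction_coeff q s J I k)"
    by simp
  then show ?thesis
    unfolding pivot_coeff_eq_tau_coeff[OF assms(1,3)]
    using True contraction_coeff_eq[OF assms(1,3) True, of q s]
      sum_contraction_coeff_above[OF assms(1,3), of q s]
    by (simp add: algebra_simps)
next
  case False
  have "{k\<in>I. s \<le> k} = {k\<in>I. s < k}"
    using False by (auto simp: le_less)
  then show ?thesis
    unfolding pivot_coeff_eq_tau_coeff[OF assms(1,3)]
    using False tau_coeff_insert_inside[OF assms(1,2) False assms(3), of q]
      sum_contraction_coeff_above[OF assms(1,3), of q s]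
    by (simp add: algebra_simps)
qed

section \<open>Sums over the subsets of given parity\<close>

definition parity_subsets :: "'s set \<Rightarrow> bool \<Rightarrow> 's set set" where
  "parity_subsets J e = {I. I \<subseteq> J \<and> even (card I) = e}"

definition tau :: "'r::comm_ring_1 \<Rightarrow> bool \<Rightarrow> 's::linorder set \<Rightarrow> ('s, 'r) ncpoly" where
  "tau q e J = (\<Sum>I\<in>parity_subsets J e. scal (tau_coeff q J I) (tJ (J - I)))"

lemma finite_parity_subsets [simp]: "finite J \<Longrightarrow> finite (parity_subsets J e)"
  unfolding parity_subsets_def by (rule finite_subset[of _ "Pow J"]) auto

lemma tau_plus_eq_tau: "finite J \<Longrightarrow> tau_plus q J = tau q True J"
  unfolding tau_plus_def tau_def parity_subsets_def tau_coeff_def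
  by (rule sum.cong) (auto simp: ellJ_eq_inversions)

lemma tau_minus_eq_tau: "finite J \<Longrightarrow> tau_minus q J = tau q False J"
  unfolding tau_minus_def tau_def parity_subsets_def tau_coeff_def
  by (rule sum.cong) (auto simp: ellJ_eq_inversions elim!: oddE)

lemma sum_parity_subsets_swap:
  assumes "finite J"
  shows "(\<Sum>I\<in>parity_subsets J e. \<Sum>k\<in>{k\<in>J - I. P k}. g I k)
    = (\<Sum>I\<in>parity_subsets J (\<not> e). \<Sum>k\<in>{k\<in>I. P k}. g (I - {k}) k)"
proof -
  have finite_subsets: "finite I" if "I \<in> parity_subsets J e'" for I e'
    using that assms finite_subset unfolding parity_subsets_def by blast
  have "(\<Sum>I\<in>parity_subsets J e. \<Sum>k\<in>{k\<in>J - I. P k}. g I k)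
      = (\<Sum>(I, k)\<in>Sigma (parity_subsets J e) (\<lambda>I. {k\<in>J - I. P k}). g I k)"
    by (rule sum.Sigma) (use assms in auto)
  also have "\<dots> = (\<Sum>(I, k)\<in>Sigma (parity_subsets J (\<not> e)) (\<lambda>I. {k\<in>I. P k}). g (I - {k}) k)"
  proof (rule sum.reindex_bij_witness
      [where i = "\<lambda>(I, k). (I - {k}, k)" and j = "\<lambda>(I, k). (insert k I, k)"])
    fix Ik assume "Ik \<in> Sigma (parity_subsets J e) (\<lambda>I. {k\<in>J - I. P k})"
    moreover obtain I k where Ik: "Ik = (I, k)"
      by fastforce
    ultimately have I: "I \<in> parity_subsets J e" "k \<in> J" "k \<notin> I" "P k"
      by auto
    then show "(\<lambda>(I, k). (I - {k}, k)) ((\<lambda>(I, k). (insert k I, k)) Ik) = Ik"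
      "(\<lambda>(I, k). g (I - {k}) k) ((\<lambda>(I, k). (insert k I, k)) Ik) = (\<lambda>(I, k). g I k) Ik"
      unfolding Ik by auto
    show "(\<lambda>(I, k). (insert k I, k)) Ik \<in> Sigma (parity_subsets J (\<not> e)) (\<lambda>I. {k\<in>I. P k})"
      using I finite_subsets[OF I(1)] unfolding Ik parity_subsets_def by auto
  next
    fix Ik assume "Ik \<in> Sigma (parity_subsets J (\<not> e)) (\<lambda>I. {k\<in>I. P k})"
    moreover obtain I k where Ik: "Ik = (I, k)"
      by fastforce
    ultimately have I: "I \<in> parity_subsets J (\<not> e)" "k \<in> I" "P k"
      by auto
    then show "(\<lambda>(I, k). (insert k I, k)) ((\<lambda>(I, k). (I - {k}, k)) Ik) = Ik"
      unfolding Ik by auto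
    show "(\<lambda>(I, k). (I - {k}, k)) Ik \<in> Sigma (parity_subsets J e) (\<lambda>I. {k\<in>J - I. P k})"
      using I finite_subsets[OF I(1)] unfolding Ik parity_subsets_def by (auto simp: card_Diff_singleton_if)
  qed
  also have "\<dots> = (\<Sum>I\<in>parity_subsets J (\<not> e). \<Sum>k\<in>{k\<in>I. P k}. g (I - {k}) k)"
    by (rule sum.Sigma[symmetric]) (use assms finite_subsets in auto)
  finally show ?thesis .
qed

lemma parity_subsets_insert:
  assumes "finite J" "s \<notin> J"
  shows "parity_subsets (insert s J) e = parity_subsets J e \<union> insert s ` parity_subsets J (\<not> e)"
proof (intro equalityI subsetI)
  fix I assume I: "I \<in> parity_subsets (insert s J) e"
  show "I \<in> parity_subsets J e \<union> insert s ` parity_subsets J (\<not> e)"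
  proof (cases "s \<in> I")
    case True
    have "finite I"
      using I assms(1) finite_subset unfolding parity_subsets_def by blast
    then have "card I = Suc (card (I - {s}))"
      using True by (rule card_Suc_Diff1[symmetric])
    then have "I - {s} \<in> parity_subsets J (\<not> e)"
      using I unfolding parity_subsets_def by auto
    moreover have "I = insert s (I - {s})"
      using True by auto
    ultimately show ?thesis
      by blast
  next
    case False
    then show ?thesis
      using I unfolding parity_subsets_def by auto
  qed
next
  fix I assume I: "I \<in> parity_subsets J e \<union> insert s ` parity_subsets J (\<not> e)"
  show "I \<in> parity_subsets (insert s J) e"
  proof (cases "I \<in> parity_subsets J e")
    case False
    then obtain I0 where I0: "I0 \<in> parity_subsets J (\<not> e)" "I = insert s I0"
      using I by blast
    moreover have "finite I0" "s \<notin> I0"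
      using I0(1) assms finite_subset unfolding parity_subsets_def by auto
    ultimately show ?thesis
      unfolding parity_subsets_def by auto
  qed (auto simp: parity_subsets_def)
qed

lemma tau_insert:
  assumes "finite J" "s \<notin> J"
  shows "tau q e (insert s J)
    = (\<Sum>I\<in>parity_subsets J e. scal (tau_coeff q (insert s J) I) (tJ (insert s J - I)))
      + (\<Sum>I\<in>parity_subsets J (\<not> e). scal (tau_coeff q (insert s J) (insert s I)) (tJ (J - I)))"
proof -
  have outside: "s \<notin> I" if "I \<in> parity_subsets J e'" for I e'
    using that assms(2) unfolding parity_subsets_def by auto
  have "inj_on (insert s) (parity_subsets J (\<not> e))"
    by (rule inj_onI) (metis Diff_insert_absorb outside)
  moreover have "parity_subsets J e \<inter> insert s ` parity_subsets J (\<not> e) = {}"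
    using outside by blast
  moreover have "insert s J - insert s I = J - I" for I
    using assms(2) by auto
  ultimately show ?thesis
    unfolding tau_def parity_subsets_insert[OF assms] using assms(1)
    by (simp add: sum.union_disjoint sum.reindex)
qed

lemma tau_ncmult_gen:
  "tau q e J \<cdot> gen s
    = (\<Sum>I\<in>parity_subsets J e. Poly_Mapping.single (sorted_list_of_set (J - I) @ [s]) (tau_coeff q J I))"
  unfolding tau_def ncmult_sum_left scal_tJ gen_def ncmult_single by simp

lemma keys_tau_ncmult_gen:
  assumes "finite J" "J \<subseteq> S" "s \<in> S"
  shows "\<forall>w\<in>Poly_Mapping.keys (tau q e J \<cdot> gen s). set w \<subseteq> S"
proof
  fix w assume "w \<in> Poly_Mapping.keys (tau q e J \<cdot> gen s)"
  then obtain I where "w = sorted_list_of_set (J - I) @ [s]"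
    unfolding tau_ncmult_gen using keys_sum by (fastforce split: if_splits)
  then show "set w \<subseteq> S"
    using assms by auto
qed

lemma nf_lin_tau_ncmult_gen:
  assumes "finite S" "J \<subseteq> S" "s \<in> S"
  shows "nf_lin S q (tau q e J \<cdot> gen s)
    = (\<Sum>I\<in>parity_subsets J e. scal (tau_coeff q J I) (insert_term s (J - I) {}))
      + (\<Sum>I\<in>parity_subsets J e. scal (tau_coeff q J I) (contraction_terms q s (J - I) {}))"
proof -
  have "nf S q (sorted_list_of_set (J - I) @ [s])
      = insert_term s (J - I) {} + contraction_terms q s (J - I) {}" for I
  proof -
    have "set (sorted_list_of_set (J - I)) = J - I"
      using finite_subset[OF _ assms(1)] assms(2) by (metis Diff_subset order_trans set_sorted_list_of_set)
    then show ?thesis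
      using nf_bubble[OF assms(1,3), of "sorted_list_of_set (J - I)" "[]" q] assms(2) by auto
  qed
  then show ?thesis
    unfolding tau_ncmult_gen nf_lin_sum nf_lin_single by (simp add: scal_add_right sum.distrib)
qed

lemma sum_contraction_terms:
  assumes "finite J"
  shows "(\<Sum>I\<in>parity_subsets J e. scal (tau_coeff q J I) (contraction_terms q s (J - I) {}))
    = (\<Sum>I\<in>parity_subsets J (\<not> e).
        scal (\<Sum>k\<in>{k\<in>I. s \<le> k}. contraction_coeff q s J I k) (tJ (J - I)))"
proof -
  have "(\<Sum>I\<in>parity_subsets J e. scal (tau_coeff q J I) (contraction_terms q s (J - I) {}))
      = (\<Sum>I\<in>parity_subsets J e. \<Sum>k\<in>{k\<in>J - I. s \<le> k}.
          scal (tau_coeff q J I * (-1) ^ card {x\<in>J - I. k < x} * (if k = s then q else 2 * q))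
            (tJ (J - I - {k})))"
    unfolding contraction_terms_def by (simp add: scal_sum_right scal_scal mult.assoc)
  also have "\<dots> = (\<Sum>I\<in>parity_subsets J (\<not> e). \<Sum>k\<in>{k\<in>I. s \<le> k}.
          scal (contraction_coeff q s J I k) (tJ (J - (I - {k}) - {k})))"
    unfolding contraction_coeff_def by (rule sum_parity_subsets_swap[OF assms])
  also have "\<dots> = (\<Sum>I\<in>parity_subsets J (\<not> e).
        scal (\<Sum>k\<in>{k\<in>I. s \<le> k}. contraction_coeff q s J I k) (tJ (J - I)))"
    unfolding scal_sum_left by (intro sum.cong refl) (simp add: Diff_insert[symmetric] insert_absorb)
  finally show ?thesis .
qed

lemma sum_insert_terms_outside:
  assumes "finite J" "s \<notin> J"
  shows "(\<Sum>I\<in>parity_subsets J e. scal (tau_coeff q J I) (insert_term s (J - I) {}))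
    = scal ((-1) ^ card {j\<in>J. s < j})
        (\<Sum>I\<in>parity_subsets J e. scal (tau_coeff q (insert s J) I) (tJ (insert s J - I)))"
  unfolding scal_sum_right
proof (rule sum.cong[OF refl])
  fix I assume "I \<in> parity_subsets J e"
  then have "I \<subseteq> J"
    unfolding parity_subsets_def by simp
  moreover have "insert s (J - I) = insert s J - I"
    using \<open>I \<subseteq> J\<close> assms(2) by auto
  ultimately show "scal (tau_coeff q J I) (insert_term s (J - I) {})
      = scal ((-1) ^ card {j\<in>J. s < j}) (scal (tau_coeff q (insert s J) I) (tJ (insert s J - I)))"
    unfolding insert_term_def using assms tau_coeff_insert_outside[OF assms, of I q]
    by (simp add: scal_scal)
qed

lemma sum_insert_terms_inside:
  assumes "finite J" "s \<in> J"
  shows "(\<Sum>I\<in>parity_subsets J e. scal (tau_coeff q J I) (insert_term s (J - I) {}))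
    = (\<Sum>I\<in>parity_subsets J (\<not> e). scal (if s \<in> I then 0
        else tau_coeff q J (insert s I) * (-1) ^ card {x\<in>J - insert s I. s < x}) (tJ (J - I)))"
proof -
  define h where
    "h I = scal (tau_coeff q J I * (-1) ^ card {x\<in>J - I. s < x}) (tJ (insert s (J - I)))" for I
  have "(\<Sum>I\<in>parity_subsets J e. scal (tau_coeff q J I) (insert_term s (J - I) {}))
      = (\<Sum>I\<in>parity_subsets J (\<not> \<not> e). \<Sum>k\<in>{k\<in>I. k = s}. h (insert k (I - {k})))"
  proof (rule sum.cong)
    fix I assume "I \<in> parity_subsets J (\<not> \<not> e)"
    show "scal (tau_coeff q J I) (insert_term s (J - I) {}) = (\<Sum>k\<in>{k\<in>I. k = s}. h (insert k (I - {k})))"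
    proof (cases "s \<in> I")
      case True
      then have "{k\<in>I. k = s} = {s}" "insert s (I - {s}) = I"
        by auto
      with True show ?thesis
        by (simp add: h_def insert_term_def scal_scal)
    next
      case False
      then have no_s: "{k\<in>I. k = s} = {}"
        by auto
      show ?thesis
        unfolding no_s using False assms(2) by (simp add: insert_term_def)
    qed
  qed simp
  also have "\<dots> = (\<Sum>I\<in>parity_subsets J (\<not> e). \<Sum>k\<in>{k\<in>J - I. k = s}. h (insert k I))"
    by (rule sum_parity_subsets_swap[OF assms(1), symmetric])
  also have "\<dots> = (\<Sum>I\<in>parity_subsets J (\<not> e). scal (if s \<in> I then 0
        else tau_coeff q J (insert s I) * (-1) ^ card {x\<in>J - insert s I. s < x}) (tJ (J - I)))"
  proof (rule sum.cong[OF refl])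
    fix I
    show "(\<Sum>k\<in>{k\<in>J - I. k = s}. h (insert k I)) = scal (if s \<in> I then 0
        else tau_coeff q J (insert s I) * (-1) ^ card {x\<in>J - insert s I. s < x}) (tJ (J - I))"
    proof (cases "s \<in> I")
      case False
      then have "{k\<in>J - I. k = s} = {s}" "insert s (J - insert s I) = J - I"
        using assms(2) by auto
      with False show ?thesis
        by (simp add: h_def)
    next
      case True
      then have no_s: "{k\<in>J - I. k = s} = {}"
        by auto
      show ?thesis
        unfolding no_s using True by simp
    qed
  qed
  finally show ?thesis .
qed

lemma nf_lin_tau_ncmult_gen_outside:
  fixes q :: "'r::comm_ring_1"
  assumes "finite S" "J \<subseteq> S" "s \<in> S" "s \<notin> J"
  shows "nf_lin S q (tau q e J \<cdot> gen s)
    = scal ((-1) ^ card {j\<in>J. s < j}) (tau q e (insert s J))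
      + scal ((-1) ^ (card J + 1) * (if e then q else 1)) (tau q (\<not> e) J)"
proof -
  have J: "finite J" "s \<notin> J"
    using assms finite_subset by auto
  define \<epsilon> where "\<epsilon> = (-1::'r) ^ card {j\<in>J. s < j}"
  define \<kappa> where "\<kappa> = (-1::'r) ^ (card J + 1) * (if e then q else 1)"
  have "(\<Sum>k\<in>{k\<in>I. s \<le> k}. contraction_coeff q s J I k)
      = \<epsilon> * tau_coeff q (insert s J) (insert s I) + \<kappa> * tau_coeff q J I"
    if "I \<in> parity_subsets J (\<not> e)" for I
    using that sum_contraction_coeff_outside[OF J, of I q] unfolding \<epsilon>_def \<kappa>_def parity_subsets_def
    by auto
  then have "(\<Sum>I\<in>parity_subsets J e. scal (tau_coeff q J I) (contraction_terms q s (J - I) {}))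
      = scal \<epsilon> (\<Sum>I\<in>parity_subsets J (\<not> e). scal (tau_coeff q (insert s J) (insert s I)) (tJ (J - I)))
        + scal \<kappa> (tau q (\<not> e) J)"
    unfolding sum_contraction_terms[OF J(1)] tau_def
    by (simp add: scal_add_left scal_sum_right scal_scal sum.distrib)
  then show ?thesis
    unfolding nf_lin_tau_ncmult_gen[OF assms(1-3)] sum_insert_terms_outside[OF J] tau_insert[OF J]
      \<epsilon>_def[symmetric] \<kappa>_def[symmetric]
    by (simp add: scal_add_right)
qed

lemma nf_lin_tau_ncmult_gen_inside:
  fixes q :: "'r::comm_ring_1"
  assumes "finite S" "J \<subseteq> S" "s \<in> J"
  shows "nf_lin S q (tau q e J \<cdot> gen s)
    = scal ((-1) ^ (card J + 1) * (if e then q else 1)) (tau q (\<not> e) J)"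
proof -
  have J: "finite J" "s \<in> J"
    using assms finite_subset by auto
  have "nf_lin S q (tau q e J \<cdot> gen s)
      = (\<Sum>I\<in>parity_subsets J (\<not> e). scal ((if s \<in> I then 0
          else tau_coeff q J (insert s I) * (-1) ^ card {x\<in>J - insert s I. s < x})
          + (\<Sum>k\<in>{k\<in>I. s \<le> k}. contraction_coeff q s J I k)) (tJ (J - I)))"
    unfolding nf_lin_tau_ncmult_gen[OF assms(1,2) subsetD[OF assms(2,3)]]
      sum_insert_terms_inside[OF J] sum_contraction_terms[OF J(1)]
    by (simp add: scal_add_left sum.distrib)
  also have "\<dots> = (\<Sum>I\<in>parity_subsets J (\<not> e).
      scal ((-1) ^ (card J + 1) * (if e then q else 1) * tau_coeff q J I) (tJ (J - I)))"
  proof (rule sum.cong[OF refl])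
    fix I assume "I \<in> parity_subsets J (\<not> e)"
    then have "I \<subseteq> J" "odd (card I) = e"
      unfolding parity_subsets_def by auto
    then show "scal ((if s \<in> I then 0
          else tau_coeff q J (insert s I) * (-1) ^ card {x\<in>J - insert s I. s < x})
          + (\<Sum>k\<in>{k\<in>I. s \<le> k}. contraction_coeff q s J I k)) (tJ (J - I))
        = scal ((-1) ^ (card J + 1) * (if e then q else 1) * tau_coeff q J I) (tJ (J - I))"
      using sum_contraction_coeff_inside[OF J, of I q] by simp
  qed
  also have "\<dots> = scal ((-1) ^ (card J + 1) * (if e then q else 1)) (tau q (\<not> e) J)"
    unfolding tau_def by (simp add: scal_sum_right scal_scal)
  finally show ?thesis .
qed

lemma reduces_to_nf_lin_tau_ncmult_gen:
  fixes q :: "'r::comm_ring_1"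
  assumes "finite S" "J \<subseteq> S" "s \<in> S"
  shows "reduces (Gq_empty S q) (tau q e J \<cdot> gen s) (nf_lin S q (tau q e J \<cdot> gen s))"
proof (cases "(1::'r) = 0")
  case True
  \<comment> \<open>Then every polynomial is \<open>0\<close>, and \<open>lm\<close> of the relations is an unspecified \<open>THE\<close>.\<close>
  then show ?thesis
    using poly_mapping_trivial_ring by (metis reduces_def rtranclp.rtrancl_refl)
next
  case False
  then show ?thesis
    using reduces_to_nf_lin[OF assms(1)]
      keys_tau_ncmult_gen[OF finite_subset[OF assms(2,1)] assms(2,3)]
    by blast
qed

theorem lemma3p7:
  fixes S :: "'s::linorder set" and q :: "'r::comm_ring_1" and J :: "'s set" and s :: 's
  assumes "finite S" and "J \<subseteq> S" and "s \<in> S"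
  shows "(s \<in> J \<longrightarrow>
            reduces (Gq_empty S q) (tau_plus q J \<cdot> gen s)
              (scal ((-1) ^ (card J + 1) * q) (tau_minus q J)) \<and>
            reduces (Gq_empty S q) (tau_minus q J \<cdot> gen s)
              (scal ((-1) ^ (card J + 1)) (tau_plus q J)))
       \<and> (s \<notin> J \<longrightarrow>
            reduces (Gq_empty S q) (tau_plus q J \<cdot> gen s)
              (scal ((-1) ^ card {j\<in>J. s < j}) (tau_plus q (J \<union> {s}))
               + scal ((-1) ^ (card J + 1) * q) (tau_minus q J)) \<and>
            reduces (Gq_empty S q) (tau_minus q J \<cdot> gen s)
              (scal ((-1) ^ card {j\<in>J. s < j}) (tau_minus q (J \<union> {s}))
               + scal ((-1) ^ (card J + 1)) (tau_plus q J)))"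
proof -
  have "finite J" "finite (J \<union> {s})"
    using assms finite_subset by auto
  note tau_eqs = tau_plus_eq_tau[OF this(1)] tau_minus_eq_tau[OF this(1)]
    tau_plus_eq_tau[OF this(2)] tau_minus_eq_tau[OF this(2)]
  have inside: "reduces (Gq_empty S q) (tau q e J \<cdot> gen s)
      (scal ((-1) ^ (card J + 1) * (if e then q else 1)) (tau q (\<not> e) J))"
    if "s \<in> J" for e
    using reduces_to_nf_lin_tau_ncmult_gen[OF assms, of q e]
    unfolding nf_lin_tau_ncmult_gen_inside[OF assms(1,2) that] .
  have outside: "reduces (Gq_empty S q) (tau q e J \<cdot> gen s)
      (scal ((-1) ^ card {j\<in>J. s < j}) (tau q e (J \<union> {s}))
       + scal ((-1) ^ (card J + 1) * (if e then q else 1)) (tau q (\<not> e) J))"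
    if "s \<notin> J" for e
    using reduces_to_nf_lin_tau_ncmult_gen[OF assms, of q e]
    unfolding nf_lin_tau_ncmult_gen_outside[OF assms that] by simp
  show ?thesis
    unfolding tau_eqs using inside[of True] inside[of False] outside[of True] outside[of False]
    by simp
qed

end
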